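(* Let $1<\beta<2$, $m_{-1}=0$ and $m_p=T_\beta^p(\beta/2)$ for $p\ge0$, and assume the points $m_{-1},m_0,m_1,\dots$ are pairwise distinct. Define $\psi_0=(\beta/2)^{-1/2}\mathbf 1_{[0,\beta/2]}$, and for $p\ge1$ let $m_l=\max\{m_j:-1\le j<p,\ m_j<m_p\}$, $m_u=\min\{m_j:-1\le j<p,\ m_j>m_p\}$, $C_p=\sqrt{\frac{(m_p-m_l)(m_u-m_p)}{m_u-m_l}}$, and $$\psi_p(x)=\begin{cases}C_p/(m_p-m_l)&m_l\le x\le m_p\\ -C_p/(m_u-m_p)& m_p<x\le m_u\\ 0&\text{otherwise on }[0,1].\end{cases}$$ Then $\{\psi_p\}_{p\ge0}$ is an orthonormal family in $L^2[0,1]$, and the matrix elements $\langle n|\mathcal L_\beta|m\rangle=\int_0^1\psi_n(x)[\mathcal L_\beta\psi_m](x)\,dx$ satisfy $\langle n|\mathcal L_\beta|m\rangle=0$ whenever $n>m+1$ (upper Hessenberg form).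
   Context: $T_\beta(x)=\beta x$ for $0\le x<\tfrac12$, $T_\beta(x)=\beta(x-\tfrac12)$ for $\tfrac12\le x\le1$. The transfer operator is $[\mathcal L_\beta f](y)=\frac1\beta\left[f\!\left(\frac y\beta\right)+f\!\left(\frac y\beta+\frac12\right)\right]$ for $0\le y\le\beta/2$ and $[\mathcal L_\beta f](y)=0$ for $\beta/2<y\le1$. (Note $m_p\in(0,\beta/2)$ for $p\ge1$ under the distinctness assumption, so $m_l,m_u$ exist.) *)

theory Defs
  imports "HOL-Analysis.Analysis"
begin

definition Tb :: "real \<Rightarrow> real \<Rightarrow> real" where
  "Tb \<beta> x = (if x < 1/2 then \<beta> * x else \<beta> * (x - 1/2))"

definition Lb :: "real \<Rightarrow> (real \<Rightarrow> real) \<Rightarrow> real \<Rightarrow> real" where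
  "Lb \<beta> f y = (if 0 \<le> y \<and> y \<le> \<beta>/2
                 then (1/\<beta>) * (f (y/\<beta>) + f (y/\<beta> + 1/2)) else 0)"

definition mpt :: "real \<Rightarrow> int \<Rightarrow> real" where
  "mpt \<beta> j = (if j = -1 then 0 else (Tb \<beta> ^^ nat j) (\<beta>/2))"

definition mlow :: "real \<Rightarrow> nat \<Rightarrow> real" where
  "mlow \<beta> p = Max {mpt \<beta> j | j. -1 \<le> j \<and> j < int p \<and> mpt \<beta> j < mpt \<beta> (int p)}"

definition mup :: "real \<Rightarrow> nat \<Rightarrow> real" where
  "mup \<beta> p = Min {mpt \<beta> j | j. -1 \<le> j \<and> j < int p \<and> mpt \<beta> j > mpt \<beta> (int p)}"

definition Cp :: "real \<Rightarrow> nat \<Rightarrow> real" where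
  "Cp \<beta> p = sqrt ((mpt \<beta> (int p) - mlow \<beta> p) * (mup \<beta> p - mpt \<beta> (int p))
                     / (mup \<beta> p - mlow \<beta> p))"

definition psi :: "real \<Rightarrow> nat \<Rightarrow> real \<Rightarrow> real" where
  "psi \<beta> p x =
     (if p = 0 then (if 0 \<le> x \<and> x \<le> \<beta>/2 then (\<beta>/2) powr (-1/2) else 0)
      else if mlow \<beta> p \<le> x \<and> x \<le> mpt \<beta> (int p)
        then Cp \<beta> p / (mpt \<beta> (int p) - mlow \<beta> p)
      else if mpt \<beta> (int p) < x \<and> x \<le> mup \<beta> p
        then - Cp \<beta> p / (mup \<beta> p - mpt \<beta> (int p))
      else 0)"

end

theory Submission
  imports Defs
begin

text \<open>
  Call a function piecewise constant with respect to a finite set \<open>P\<close> if it is constant on every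
  open interval missing \<open>P\<close>. Then \<open>\<psi>\<^sub>p\<close> is piecewise constant with respect to the orbit points
  \<open>m\<^sub>-\<^sub>1, \<dots>, m\<^sub>p\<close>, and since \<open>T\<^sub>\<beta>\<close> maps each orbit point to the next one (and \<open>0\<close> to itself),
  the transfer operator raises the number of orbit points needed by one. On the other hand, for
  \<open>n \<ge> 1\<close> the function \<open>\<psi>\<^sub>n\<close> has mean zero and is supported on \<open>[m\<^sub>l, m\<^sub>u]\<close>, an interval whose
  interior contains none of \<open>m\<^sub>-\<^sub>1, \<dots>, m\<^sub>n\<^sub>-\<^sub>1\<close>. Hence \<open>\<psi>\<^sub>n\<close> is orthogonal to every function that
  is piecewise constant with respect to these points, in particular to \<open>\<psi>\<^sub>m\<close> and to \<open>\<L>\<^sub>\<beta> \<psi>\<^sub>m\<close>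
  whenever \<open>m < n\<close>, resp. \<open>m + 1 < n\<close>.
\<close>

section \<open>Two-step functions\<close>

definition step_fun :: "real \<Rightarrow> real \<Rightarrow> real \<Rightarrow> real \<Rightarrow> real \<Rightarrow> real \<Rightarrow> real" where
  "step_fun A B a b c x = A * indicator {a..b} x + B * indicator {b<..c} x"

lemma step_fun_measurable [measurable]: "step_fun A B a b c \<in> borel_measurable lborel"
  unfolding step_fun_def by measurable

lemma step_fun_mult_const: "step_fun A B a b c x * \<gamma> = step_fun (A * \<gamma>) (B * \<gamma>) a b c x"
  by (simp add: step_fun_def algebra_simps)

lemma step_fun_square: "(step_fun A B a b c x)\<^sup>2 = step_fun (A\<^sup>2) (B\<^sup>2) a b c x"
  by (auto simp: step_fun_def indicator_def power2_eq_square)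

lemma
  fixes a b c :: real
  assumes "0 \<le> a" "a \<le> b" "b \<le> c" "c \<le> 1"
  shows set_integrable_step_fun: "set_integrable lborel {0..1} (step_fun A B a b c)"
    and set_integral_step_fun: "(LINT x:{0..1}|lborel. step_fun A B a b c x) = A * (b - a) + B * (c - b)"
proof -
  have restrict: "(\<lambda>x. indicator {0..1} x *\<^sub>R step_fun A B a b c x) = step_fun A B a b c"
    using assms by (auto simp: indicator_def fun_eq_iff step_fun_def)
  have A: "integrable lborel (\<lambda>x. A * indicator {a..b} x :: real)"
   and B: "integrable lborel (\<lambda>x. B * indicator {b<..c} x :: real)"
    using assms by (auto intro: integrable_real_indicator)
  show "set_integrable lborel {0..1} (step_fun A B a b c)"
    unfolding set_integrable_def restrict unfolding step_fun_def using A B by simp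
  show "(LINT x:{0..1}|lborel. step_fun A B a b c x) = A * (b - a) + B * (c - b)"
    unfolding set_lebesgue_integral_def restrict unfolding step_fun_def
    using assms by (simp add: Bochner_Integration.integral_add[OF A B])
qed

lemma set_integral_step_fun_mult:
  fixes a b c :: real
  assumes "0 \<le> a" "a \<le> b" "b \<le> c" "c \<le> 1"
    and [measurable]: "g \<in> borel_measurable lborel" and const: "\<And>x. x \<in> {a<..<c} \<Longrightarrow> g x = \<gamma>"
  shows "(LINT x:{0..1}|lborel. step_fun A B a b c x * g x) = (A * (b - a) + B * (c - b)) * \<gamma>"
proof -
  have "step_fun A B a b c x * g x = step_fun A B a b c x * \<gamma>" if "x \<notin> {a, c}" for x
    using const[of x] that assms(2,3) by (cases "x \<in> {a<..<c}") (auto simp: step_fun_def indicator_def)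
  then have "AE x in lborel. indicator {0..1} x *\<^sub>R (step_fun A B a b c x * g x)
                          = indicator {0..1} x *\<^sub>R (step_fun A B a b c x * \<gamma>)"
    by (intro AE_I'[OF finite_imp_null_set_lborel[of "{a, c}"]]) auto
  then have "(LINT x:{0..1}|lborel. step_fun A B a b c x * g x)
           = (LINT x:{0..1}|lborel. step_fun A B a b c x * \<gamma>)"
    unfolding set_lebesgue_integral_def by (intro integral_cong_AE) simp_all
  also have "\<dots> = (LINT x:{0..1}|lborel. step_fun (A * \<gamma>) (B * \<gamma>) a b c x)"
    by (simp only: step_fun_mult_const)
  also have "\<dots> = (A * (b - a) + B * (c - b)) * \<gamma>"
    using assms(1-4) by (simp add: set_integral_step_fun algebra_simps)
  finally show ?thesis .
qed

section \<open>Piecewise constant functions and the transfer operator\<close>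

definition piecewise_const_wrt :: "real set \<Rightarrow> (real \<Rightarrow> real) \<Rightarrow> bool" where
  "piecewise_const_wrt P f \<longleftrightarrow>
     (\<forall>a b. P \<inter> {a<..<b} = {} \<longrightarrow> (\<forall>x\<in>{a<..<b}. \<forall>y\<in>{a<..<b}. f x = f y))"

lemma piecewise_const_wrtD:
  "piecewise_const_wrt P f \<Longrightarrow> P \<inter> {a<..<b} = {} \<Longrightarrow> x \<in> {a<..<b} \<Longrightarrow> y \<in> {a<..<b} \<Longrightarrow> f x = f y"
  unfolding piecewise_const_wrt_def by blast

lemma piecewise_const_wrt_mono:
  "piecewise_const_wrt P f \<Longrightarrow> P \<subseteq> Q \<Longrightarrow> piecewise_const_wrt Q f"
  unfolding piecewise_const_wrt_def by blast

lemma greaterThanLessThan_same_side: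
  fixes t x y :: real
  assumes "t \<notin> {a<..<b}" "x \<in> {a<..<b}" "y \<in> {a<..<b}"
  shows "(t \<le> x \<longleftrightarrow> t \<le> y) \<and> (x \<le> t \<longleftrightarrow> y \<le> t) \<and> (t < x \<longleftrightarrow> t < y) \<and> (x < t \<longleftrightarrow> y < t)"
  using assms by auto

lemma Tb_left_branch:
  assumes "0 < \<beta>" "b \<le> \<beta>/2" "t \<in> {a/\<beta><..<b/\<beta>}"
  shows "Tb \<beta> t \<in> {a<..<b}"
proof -
  have "b/\<beta> \<le> 1/2" using assms(1,2) by (simp add: divide_simps)
  moreover have "t < b/\<beta>" using assms(3) by simp
  ultimately have "t < 1/2" by linarith
  then have "Tb \<beta> t = \<beta> * t" by (simp add: Tb_def)
  then show ?thesis using assms(1,3) by (simp add: field_simps)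
qed

lemma Tb_right_branch:
  assumes "0 < \<beta>" "0 \<le> a" "t \<in> {a/\<beta> + 1/2<..<b/\<beta> + 1/2}"
  shows "Tb \<beta> t \<in> {a<..<b}"
proof -
  have "0 \<le> a/\<beta>" using assms(1,2) by simp
  then have "Tb \<beta> t = \<beta> * (t - 1/2)" using assms(3) by (simp add: Tb_def)
  then show ?thesis using assms(1,3) by (simp add: field_simps)
qed

lemma Lb_piecewise_const_wrt:
  assumes "0 < \<beta>" and f: "piecewise_const_wrt P f"
    and Q: "0 \<in> Q" "\<beta>/2 \<in> Q" "Tb \<beta> ` P \<subseteq> Q"
  shows "piecewise_const_wrt Q (Lb \<beta> f)"
  unfolding piecewise_const_wrt_def
proof (intro allI impI ballI)
  fix a b x y :: real
  assume gap: "Q \<inter> {a<..<b} = {}" and x: "x \<in> {a<..<b}" and y: "y \<in> {a<..<b}"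
  have "0 \<notin> {a<..<b}" "\<beta>/2 \<notin> {a<..<b}"
    using gap Q by auto
  note sides = greaterThanLessThan_same_side[OF this(1) x y] greaterThanLessThan_same_side[OF this(2) x y]
  show "Lb \<beta> f x = Lb \<beta> f y"
  proof (cases "0 \<le> x \<and> x \<le> \<beta>/2")
    case False
    then have "\<not> (0 \<le> y \<and> y \<le> \<beta>/2)" using sides by blast
    with False show ?thesis by (simp only: Lb_def if_False)
  next
    case True
    define a' where "a' = max a 0"
    define b' where "b' = min b (\<beta>/2)"
    have x': "x \<in> {a'<..<b'}" and y': "y \<in> {a'<..<b'}"
      using x y True sides \<open>0 \<notin> _\<close> \<open>\<beta>/2 \<notin> _\<close> by (auto simp: a'_def b'_def)
    have "a' \<ge> 0" "b' \<le> \<beta>/2" "Q \<inter> {a'<..<b'} = {}"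
      using gap by (auto simp: a'_def b'_def)
    then have "P \<inter> {a'/\<beta><..<b'/\<beta>} = {}" "P \<inter> {a'/\<beta> + 1/2<..<b'/\<beta> + 1/2} = {}"
      using Tb_left_branch[OF \<open>0 < \<beta>\<close>] Tb_right_branch[OF \<open>0 < \<beta>\<close>] Q(3) by blast+
    moreover have "x/\<beta> \<in> {a'/\<beta><..<b'/\<beta>}" "y/\<beta> \<in> {a'/\<beta><..<b'/\<beta>}"
      using x' y' \<open>0 < \<beta>\<close> by (auto simp: divide_strict_right_mono)
    ultimately have "f (x/\<beta>) = f (y/\<beta>)" "f (x/\<beta> + 1/2) = f (y/\<beta> + 1/2)"
      by (auto intro: piecewise_const_wrtD[OF f])
    then show ?thesis
      using True sides by (simp add: Lb_def)
  qed
qed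

lemma Lb_measurable [measurable]:
  assumes [measurable]: "f \<in> borel_measurable lborel"
  shows "Lb \<beta> f \<in> borel_measurable lborel"
  unfolding Lb_def by measurable

section \<open>The orbit of the critical value\<close>

lemma mpt_minus_one [simp]: "mpt \<beta> (-1) = 0"
  by (simp add: mpt_def)

lemma mpt_zero [simp]: "mpt \<beta> 0 = \<beta>/2"
  by (simp add: mpt_def)

lemma mpt_succ: "0 \<le> j \<Longrightarrow> mpt \<beta> (j + 1) = Tb \<beta> (mpt \<beta> j)"
  by (simp add: mpt_def nat_add_distrib)

lemma Tb_maps_into: "0 \<le> \<beta> \<Longrightarrow> \<beta> \<le> 2 \<Longrightarrow> x \<in> {0..\<beta>/2} \<Longrightarrow> Tb \<beta> x \<in> {0..\<beta>/2}"
  by (auto simp: Tb_def mult_left_le intro: mult_left_mono[of _ "1/2" \<beta>, simplified])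

lemma mpt_bounds: "0 \<le> \<beta> \<Longrightarrow> \<beta> \<le> 2 \<Longrightarrow> mpt \<beta> j \<in> {0..\<beta>/2}"
proof -
  assume "0 \<le> \<beta>" "\<beta> \<le> 2"
  have "(Tb \<beta> ^^ k) (\<beta>/2) \<in> {0..\<beta>/2}" for k
  proof (induction k)
    case (Suc k)
    then show ?case using Tb_maps_into[OF \<open>0 \<le> \<beta>\<close> \<open>\<beta> \<le> 2\<close>] by simp
  qed (simp add: \<open>0 \<le> \<beta>\<close>)
  then show ?thesis using \<open>0 \<le> \<beta>\<close> by (simp add: mpt_def)
qed

definition orbit_upto :: "real \<Rightarrow> int \<Rightarrow> real set" where
  "orbit_upto \<beta> k = mpt \<beta> ` {-1..k}"

lemma finite_orbit_upto [simp]: "finite (orbit_upto \<beta> k)"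
  by (simp add: orbit_upto_def)

lemma orbit_upto_mono: "k \<le> k' \<Longrightarrow> orbit_upto \<beta> k \<subseteq> orbit_upto \<beta> k'"
  by (auto simp: orbit_upto_def)

lemma zero_in_orbit_upto: "-1 \<le> k \<Longrightarrow> 0 \<in> orbit_upto \<beta> k"
  unfolding orbit_upto_def by (rule image_eqI[of _ _ "-1"]) auto

lemma half_in_orbit_upto: "0 \<le> k \<Longrightarrow> \<beta>/2 \<in> orbit_upto \<beta> k"
  unfolding orbit_upto_def by (rule image_eqI[of _ _ 0]) auto

lemma Tb_orbit_upto: "Tb \<beta> ` orbit_upto \<beta> k \<subseteq> orbit_upto \<beta> (k + 1)"
proof
  fix t assume "t \<in> Tb \<beta> ` orbit_upto \<beta> k"
  then obtain j where j: "j \<in> {-1..k}" and t: "t = Tb \<beta> (mpt \<beta> j)"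
    by (auto simp: orbit_upto_def)
  show "t \<in> orbit_upto \<beta> (k + 1)"
  proof (cases "j = -1")
    case True
    then have "t = 0" by (simp add: t Tb_def)
    with j show ?thesis using zero_in_orbit_upto by simp
  next
    case False
    then have "t = mpt \<beta> (j + 1)" using j by (simp add: t mpt_succ)
    with j show ?thesis by (auto simp: orbit_upto_def)
  qed
qed

lemma Lb_piecewise_const_wrt_orbit_upto:
  "0 < \<beta> \<Longrightarrow> 0 \<le> k \<Longrightarrow> piecewise_const_wrt (orbit_upto \<beta> k) f
    \<Longrightarrow> piecewise_const_wrt (orbit_upto \<beta> (k + 1)) (Lb \<beta> f)"
  by (rule Lb_piecewise_const_wrt[OF _ _ _ _ Tb_orbit_upto]) (simp_all add: zero_in_orbit_upto half_in_orbit_upto)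

lemma mlow_eq_Max: "mlow \<beta> p = Max (orbit_upto \<beta> (int p - 1) \<inter> {..<mpt \<beta> (int p)})"
  unfolding mlow_def orbit_upto_def by (rule arg_cong[where f = Max]) auto

lemma mup_eq_Min: "mup \<beta> p = Min (orbit_upto \<beta> (int p - 1) \<inter> {mpt \<beta> (int p)<..})"
  unfolding mup_def orbit_upto_def by (rule arg_cong[where f = Min]) auto

section \<open>The functions \<open>\<psi>\<^sub>p\<close>\<close>

lemma psi_measurable [measurable]: "psi \<beta> p \<in> borel_measurable lborel"
  unfolding psi_def by measurable

lemma psi_zero_eq_step_fun: "psi \<beta> 0 = step_fun ((\<beta>/2) powr (-1/2)) 0 0 (\<beta>/2) (\<beta>/2)"
  by (auto simp: psi_def step_fun_def fun_eq_iff indicator_def)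

lemma Haar_coefficients_normalized:
  fixes l m u C :: real
  assumes "l < m" "m < u" "C\<^sup>2 = (m - l) * (u - m) / (u - l)"
  shows "(C / (m - l))\<^sup>2 * (m - l) + (- C / (u - m))\<^sup>2 * (u - m) = 1"
proof -
  have "(C / (m - l))\<^sup>2 * (m - l) + (- C / (u - m))\<^sup>2 * (u - m) = C\<^sup>2 / (m - l) + C\<^sup>2 / (u - m)"
    using assms(1,2) by (simp add: power2_eq_square)
  also have "\<dots> = C\<^sup>2 * (u - l) / ((m - l) * (u - m))"
    using assms(1,2) by (simp add: field_simps)
  finally show ?thesis
    using assms by simp
qed

locale distinct_orbit =
  fixes \<beta> :: real
  assumes pos: "0 < \<beta>" and le_two: "\<beta> \<le> 2"
    and distinct: "\<And>i j. -1 \<le> i \<Longrightarrow> -1 \<le> j \<Longrightarrow> i \<noteq> j \<Longrightarrow> mpt \<beta> i \<noteq> mpt \<beta> j"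
begin

lemma mpt_strict_bounds: "0 < p \<Longrightarrow> 0 < mpt \<beta> (int p) \<and> mpt \<beta> (int p) < \<beta>/2"
  using mpt_bounds[of \<beta> "int p"] pos le_two distinct[of "int p" "-1"] distinct[of "int p" 0]
  by fastforce

lemma mlow_bounds:
  assumes "0 < p"
  shows "mlow \<beta> p \<in> orbit_upto \<beta> (int p - 1)" "0 \<le> mlow \<beta> p" "mlow \<beta> p < mpt \<beta> (int p)"
proof -
  have zero: "0 \<in> orbit_upto \<beta> (int p - 1) \<inter> {..<mpt \<beta> (int p)}"
    using zero_in_orbit_upto[of "int p - 1"] mpt_strict_bounds[OF assms] by simp
  then have "mlow \<beta> p \<in> orbit_upto \<beta> (int p - 1) \<inter> {..<mpt \<beta> (int p)}"
    unfolding mlow_eq_Max by (intro Max_in) auto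
  then show "mlow \<beta> p \<in> orbit_upto \<beta> (int p - 1)" "mlow \<beta> p < mpt \<beta> (int p)"
    by simp_all
  show "0 \<le> mlow \<beta> p"
    unfolding mlow_eq_Max using zero by (intro Max_ge) simp_all
qed

lemma mup_bounds:
  assumes "0 < p"
  shows "mup \<beta> p \<in> orbit_upto \<beta> (int p - 1)" "mup \<beta> p \<le> \<beta>/2" "mpt \<beta> (int p) < mup \<beta> p"
proof -
  have half: "\<beta>/2 \<in> orbit_upto \<beta> (int p - 1) \<inter> {mpt \<beta> (int p)<..}"
    using half_in_orbit_upto[of "int p - 1"] mpt_strict_bounds[OF assms] assms by simp
  then have "mup \<beta> p \<in> orbit_upto \<beta> (int p - 1) \<inter> {mpt \<beta> (int p)<..}"
    unfolding mup_eq_Min by (intro Min_in) auto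
  then show "mup \<beta> p \<in> orbit_upto \<beta> (int p - 1)" "mpt \<beta> (int p) < mup \<beta> p"
    by simp_all
  show "mup \<beta> p \<le> \<beta>/2"
    unfolding mup_eq_Min using half by (intro Min_le) simp_all
qed

lemma orbit_upto_gap:
  assumes "0 < p"
  shows "orbit_upto \<beta> (int p - 1) \<inter> {mlow \<beta> p<..<mup \<beta> p} = {}"
proof -
  have "t \<le> mlow \<beta> p \<or> mup \<beta> p \<le> t" if t: "t \<in> orbit_upto \<beta> (int p - 1)" for t
  proof -
    have "t \<noteq> mpt \<beta> (int p)"
      using t distinct[of _ "int p"] by (auto simp: orbit_upto_def)
    then consider "t < mpt \<beta> (int p)" | "mpt \<beta> (int p) < t" by linarith
    then show ?thesis
    proof cases
      case 1
      then show ?thesis unfolding mlow_eq_Max using t by (intro disjI1 Max_ge) simp_all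
    next
      case 2
      then show ?thesis unfolding mup_eq_Min using t by (intro disjI2 Min_le) simp_all
    qed
  qed
  then show ?thesis by fastforce
qed

lemma psi_piecewise_const_wrt: "piecewise_const_wrt (orbit_upto \<beta> (int p)) (psi \<beta> p)"
  unfolding piecewise_const_wrt_def
proof (intro allI impI ballI)
  fix a b x y :: real
  assume gap: "orbit_upto \<beta> (int p) \<inter> {a<..<b} = {}" and x: "x \<in> {a<..<b}" and y: "y \<in> {a<..<b}"
  show "psi \<beta> p x = psi \<beta> p y"
  proof (cases "p = 0")
    case True
    then have "0 \<notin> {a<..<b}" "\<beta>/2 \<notin> {a<..<b}"
      using gap zero_in_orbit_upto[of 0 \<beta>] half_in_orbit_upto[of 0 \<beta>] by auto
    note sides = greaterThanLessThan_same_side[OF this(1) x y] greaterThanLessThan_same_side[OF this(2) x y]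
    show ?thesis using True by (simp only: psi_def sides if_True simp_thms)
  next
    case False
    then have "{mlow \<beta> p, mpt \<beta> (int p), mup \<beta> p} \<subseteq> orbit_upto \<beta> (int p)"
      using mlow_bounds(1) mup_bounds(1) orbit_upto_mono[of "int p - 1" "int p" \<beta>]
      by (auto simp: orbit_upto_def)
    then have "mlow \<beta> p \<notin> {a<..<b}" "mpt \<beta> (int p) \<notin> {a<..<b}" "mup \<beta> p \<notin> {a<..<b}"
      using gap by auto
    note sides = greaterThanLessThan_same_side[OF this(1) x y] greaterThanLessThan_same_side[OF this(2) x y]
      greaterThanLessThan_same_side[OF this(3) x y]
    show ?thesis using False by (simp only: psi_def sides if_False)
  qed
qed

lemma psi_eq_step_fun:
  "0 < p \<Longrightarrow> psi \<beta> p = step_fun (Cp \<beta> p / (mpt \<beta> (int p) - mlow \<beta> p))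
     (- Cp \<beta> p / (mup \<beta> p - mpt \<beta> (int p))) (mlow \<beta> p) (mpt \<beta> (int p)) (mup \<beta> p)"
  using mlow_bounds(3) mup_bounds(3) by (auto simp: psi_def step_fun_def fun_eq_iff indicator_def)

lemma psi_normalized_step_fun:
  obtains A B a b c where "0 \<le> a" "a \<le> b" "b \<le> c" "c \<le> 1" "psi \<beta> p = step_fun A B a b c"
    "A\<^sup>2 * (b - a) + B\<^sup>2 * (c - b) = 1"
proof (cases "p = 0")
  case True
  have "((\<beta>/2) powr (-1/2))\<^sup>2 = (\<beta>/2) powr (-1/2 + -1/2)"
    unfolding power2_eq_square by (simp only: powr_add)
  also have "\<dots> = 1 / (\<beta>/2)"
    using pos by (simp add: powr_neg_one)
  finally have "((\<beta>/2) powr (-1/2))\<^sup>2 * (\<beta>/2 - 0) + 0\<^sup>2 * (\<beta>/2 - \<beta>/2) = 1"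
    using pos by simp
  then show ?thesis
    using that[of 0 "\<beta>/2" "\<beta>/2"] pos le_two by (simp add: True psi_zero_eq_step_fun)
next
  case False
  then have "0 < p" by simp
  note bounds = mlow_bounds[OF this] mup_bounds[OF this]
  have Cp_square: "(Cp \<beta> p)\<^sup>2 = (mpt \<beta> (int p) - mlow \<beta> p) * (mup \<beta> p - mpt \<beta> (int p)) / (mup \<beta> p - mlow \<beta> p)"
    unfolding Cp_def using bounds(3,6) by simp
  show ?thesis
    by (rule that[OF _ _ _ _ psi_eq_step_fun[OF \<open>0 < p\<close>]
          Haar_coefficients_normalized[OF bounds(3,6) Cp_square]])
      (use bounds le_two in auto)
qed

lemma psi_square_integral:
  "set_integrable lborel {0..1} (\<lambda>x. (psi \<beta> p x)\<^sup>2) \<and> (LINT x:{0..1}|lborel. psi \<beta> p x * psi \<beta> p x) = 1"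
proof -
  obtain A B a b c where step: "0 \<le> a" "a \<le> b" "b \<le> c" "c \<le> 1" "psi \<beta> p = step_fun A B a b c"
    and norm: "A\<^sup>2 * (b - a) + B\<^sup>2 * (c - b) = 1"
    by (rule psi_normalized_step_fun)
  have "(\<lambda>x. (psi \<beta> p x)\<^sup>2) = step_fun (A\<^sup>2) (B\<^sup>2) a b c"
    by (simp add: step(5) step_fun_square)
  moreover have "(\<lambda>x. psi \<beta> p x * psi \<beta> p x) = step_fun (A\<^sup>2) (B\<^sup>2) a b c"
    by (simp add: step(5) step_fun_square flip: power2_eq_square)
  ultimately show ?thesis
    using set_integrable_step_fun[OF step(1-4)] set_integral_step_fun[OF step(1-4)] norm by simp
qed

lemma psi_orthogonal_piecewise_const:
  assumes "0 < n" and g: "piecewise_const_wrt (orbit_upto \<beta> (int n - 1)) g"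
    and [measurable]: "g \<in> borel_measurable lborel"
  shows "(LINT x:{0..1}|lborel. psi \<beta> n x * g x) = 0"
proof -
  note bounds = mlow_bounds[OF \<open>0 < n\<close>] mup_bounds[OF \<open>0 < n\<close>]
  define \<gamma> where "\<gamma> = g ((mlow \<beta> n + mup \<beta> n) / 2)"
  have "(mlow \<beta> n + mup \<beta> n) / 2 \<in> {mlow \<beta> n<..<mup \<beta> n}"
    using bounds(3,6) by simp
  then have "g x = \<gamma>" if "x \<in> {mlow \<beta> n<..<mup \<beta> n}" for x
    unfolding \<gamma>_def using piecewise_const_wrtD[OF g orbit_upto_gap[OF \<open>0 < n\<close>] that] by blast
  from set_integral_step_fun_mult[OF _ _ _ _ _ this] show ?thesis
    unfolding psi_eq_step_fun[OF \<open>0 < n\<close>] using bounds le_two by simp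
qed

end

theorem mainTheorem8:
  fixes \<beta> :: real
  assumes "1 < \<beta>" and "\<beta> < 2"
    and distinct: "\<And>i j. -1 \<le> i \<Longrightarrow> -1 \<le> j \<Longrightarrow> i \<noteq> j \<Longrightarrow> mpt \<beta> i \<noteq> mpt \<beta> j"
  shows "(\<forall>n. psi \<beta> n \<in> borel_measurable lborel
              \<and> set_integrable lborel {0..1} (\<lambda>x. (psi \<beta> n x)\<^sup>2))
       \<and> (\<forall>n m. (LINT x:{0..1}|lborel. psi \<beta> n x * psi \<beta> m x) = (if n = m then 1 else 0))
       \<and> (\<forall>n m. n > m + 1 \<longrightarrow>
              (LINT x:{0..1}|lborel. psi \<beta> n x * Lb \<beta> (psi \<beta> m) x) = 0)"
proof -
  interpret distinct_orbit \<beta>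
    using assms by unfold_locales auto
  have orthogonal: "(LINT x:{0..1}|lborel. psi \<beta> n x * psi \<beta> m x) = 0" if "m < n" for n m
  proof (rule psi_orthogonal_piecewise_const)
    show "piecewise_const_wrt (orbit_upto \<beta> (int n - 1)) (psi \<beta> m)"
      by (rule piecewise_const_wrt_mono[OF psi_piecewise_const_wrt orbit_upto_mono]) (use that in simp)
  qed (use that in auto)
  have "(LINT x:{0..1}|lborel. psi \<beta> n x * psi \<beta> m x) = (if n = m then 1 else 0)" for n m
    using orthogonal[of m n] orthogonal[of n m] psi_square_integral[of n]
    by (cases n m rule: linorder_cases) (simp_all add: mult.commute)
  moreover have "(LINT x:{0..1}|lborel. psi \<beta> n x * Lb \<beta> (psi \<beta> m) x) = 0" if "m + 1 < n" for n m
  proof (rule psi_orthogonal_piecewise_const)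
    have "piecewise_const_wrt (orbit_upto \<beta> (int m + 1)) (Lb \<beta> (psi \<beta> m))"
      by (rule Lb_piecewise_const_wrt_orbit_upto[OF pos _ psi_piecewise_const_wrt]) simp
    then show "piecewise_const_wrt (orbit_upto \<beta> (int n - 1)) (Lb \<beta> (psi \<beta> m))"
      by (rule piecewise_const_wrt_mono[OF _ orbit_upto_mono]) (use that in simp)
  qed (use that in auto)
  ultimately show ?thesis
    using psi_square_integral by auto
qed

end
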